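(* Let $S \subseteq \mathbb{R}^n$ be nonempty, closed and convex, and let $F_i = f_i + g_i$, $i=1,\dots,m$, where each $f_i \colon S \to \mathbb{R}$ is continuously differentiable and each $g_i \colon S \to \mathbb{R}$ is convex and continuous. For $\ell>0$ and $x \in S$ define \[ w_\ell(x) := \max_{y \in S} \min_{i = 1,\dots,m} \left\{ \nabla f_i(x)^\top (x - y) + g_i(x) - g_i(y) - \frac{\ell}{2}\|x - y\|^2 \right\}, \] and let $W_\ell(x)$ be the (unique) maximizer $y \in S$ attaining this maximum. Then, for all $\ell > 0$, $w_\ell$ and $W_\ell$ are continuous on $S$. *)

theory Defs
  imports "HOL-Analysis.Analysis"
begin

definition mo_phi ::
  "nat \<Rightarrow> (nat \<Rightarrow> real^'n \<Rightarrow> real^'n) \<Rightarrow> (nat \<Rightarrow> real^'n \<Rightarrow> real)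
    \<Rightarrow> real \<Rightarrow> real^'n \<Rightarrow> real^'n \<Rightarrow> real" where
  "mo_phi m Df g l x y =
     Min ((\<lambda>i. Df i x \<bullet> (x - y) + g i x - g i y - (l / 2) * (norm (x - y))^2) ` {1..m})"

definition w_val ::
  "(real^'n) set \<Rightarrow> nat \<Rightarrow> (nat \<Rightarrow> real^'n \<Rightarrow> real^'n) \<Rightarrow> (nat \<Rightarrow> real^'n \<Rightarrow> real)
    \<Rightarrow> real \<Rightarrow> real^'n \<Rightarrow> real" where
  "w_val S m Df g l x = (SUP y\<in>S. mo_phi m Df g l x y)"

definition W_map ::
  "(real^'n) set \<Rightarrow> nat \<Rightarrow> (nat \<Rightarrow> real^'n \<Rightarrow> real^'n) \<Rightarrow> (nat \<Rightarrow> real^'n \<Rightarrow> real)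
    \<Rightarrow> real \<Rightarrow> real^'n \<Rightarrow> real^'n" where
  "W_map S m Df g l x =
     (THE y. y \<in> S \<and> (\<forall>z\<in>S. mo_phi m Df g l x z \<le> mo_phi m Df g l x y))"

end

theory Submission
  imports Defs
begin

(* For fixed x, each term of the minimum defining phi x y = mo_phi m Df g l x y is, as a
   function of y, strongly concave with modulus l (the sum of an affine function, the concave
   function -g_i and -(l/2)||x - y||^2), and so is their minimum. Together with a linear lower
   bound for the convex g_1 this makes the superlevel sets of phi x bounded, so phi x has a
   maximiser on S, which is unique by strong concavity; moreover every z in S falls short of
   the maximum by at least (l/4)||z - W x||^2.
   In phi x y - phi x' y the terms g_i(y) and ||y||^2 cancel, so the difference is bounded by
   delta(x, x') (1 + ||y||) with delta continuous and delta(x, x) = 0. Comparing the maximisers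
   W x and W x' through the quadratic shortfall gives
   (l/2) ||W x' - W x||^2 <= delta(x, x') (2 + 2 ||W x|| + ||W x' - W x||),
   hence W is continuous, and w = phi x (W x) is continuous as a composition. *)

lemma Min_image_abs_diff_le:
  fixes f f' :: "'i \<Rightarrow> real"
  assumes "finite I" "I \<noteq> {}" "\<And>i. i \<in> I \<Longrightarrow> \<bar>f i - f' i\<bar> \<le> e"
  shows "\<bar>Min (f ` I) - Min (f' ` I)\<bar> \<le> e"
proof -
  have Min_le_Min: "Min (h ` I) - e \<le> Min (h' ` I)"
    if close: "\<And>i. i \<in> I \<Longrightarrow> \<bar>h i - h' i\<bar> \<le> e" for h h' :: "'i \<Rightarrow> real"
  proof -
    have "Min (h ` I) - e \<le> h' i" if "i \<in> I" for i
      using Min_le[OF finite_imageI[OF assms(1)] imageI[OF that], of h] close[OF that]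
      by linarith
    with assms(1,2) show ?thesis
      by simp
  qed
  show ?thesis
    using Min_le_Min[of f f'] Min_le_Min[of f' f] assms(3) by (force simp: abs_minus_commute)
qed

lemma continuous_on_Min_image:
  fixes f :: "'i \<Rightarrow> 'a::topological_space \<Rightarrow> real"
  assumes "finite I" "I \<noteq> {}" "\<And>i. i \<in> I \<Longrightarrow> continuous_on T (f i)"
  shows "continuous_on T (\<lambda>x. Min ((\<lambda>i. f i x) ` I))"
  using assms
proof (induction I rule: finite_ne_induct)
  case (singleton i)
  then show ?case by simp
next
  case (insert i F)
  then have "continuous_on T (\<lambda>x. min (f i x) (Min ((\<lambda>i. f i x) ` F)))"
    by (intro continuous_on_min) auto
  with insert show ?case by simp
qed

lemma le_of_square_le_affine:
  fixes d p q :: real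
  assumes "d\<^sup>2 \<le> p * d + q" "0 \<le> p" "0 \<le> q"
  shows "d \<le> p + sqrt q"
proof (rule ccontr)
  assume "\<not> d \<le> p + sqrt q"
  then have "sqrt q < d" "sqrt q < d - p"
    using assms(2) by auto
  moreover have "0 \<le> sqrt q"
    using assms(3) by simp
  ultimately have "sqrt q * sqrt q < d * (d - p)"
    using mult_strict_mono[of "sqrt q" d "sqrt q" "d - p"] by linarith
  with assms show False
    by (simp add: power2_eq_square algebra_simps)
qed

lemma norm_diff_midpoint_squared:
  fixes x y y' :: "'a::real_inner"
  shows "(norm (x - midpoint y y'))\<^sup>2
    = ((norm (x - y))\<^sup>2 + (norm (x - y'))\<^sup>2) / 2 - (norm (y - y'))\<^sup>2 / 4"
  by (simp add: midpoint_def power2_norm_eq_inner inner_diff_left inner_diff_right inner_add_left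
      inner_add_right inner_commute field_simps)

lemma convex_on_linear_lower_bound:
  fixes k :: "'a::euclidean_space \<Rightarrow> real"
  assumes "closed S" "convex S" "convex_on S k" "continuous_on S k" "x \<in> S"
  obtains M where "0 \<le> M" "\<And>z. z \<in> S \<Longrightarrow> k x - M * (1 + norm (z - x)) \<le> k z"
proof -
  define K where "K = S \<inter> cball x 1"
  have "compact K" "x \<in> K"
    using assms(1,5) by (auto simp: K_def)
  then obtain u where u: "\<And>w. w \<in> K \<Longrightarrow> k u \<le> k w"
    using continuous_attains_inf[of K k] continuous_on_subset[OF assms(4)] K_def by blast
  define M where "M = k x - k u"
  have "0 \<le> M"
    using u \<open>x \<in> K\<close> by (simp add: M_def)
  moreover have "k x - M * (1 + norm (z - x)) \<le> k z" if z: "z \<in> S" for z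
  proof -
    define r where "r = norm (z - x)"
    have "0 \<le> M * r"
      using \<open>0 \<le> M\<close> by (simp add: r_def)
    moreover have "k x - M \<le> k z \<or> k x - M * r \<le> k z"
    proof (cases "r \<le> 1")
      case True
      then have "k u \<le> k z"
        using u z by (simp add: K_def r_def dist_norm norm_minus_commute)
      then show ?thesis
        by (simp add: M_def)
    next
      case False
      define w where "w = (1 - 1 / r) *\<^sub>R x + (1 / r) *\<^sub>R z"
      have "w - x = (1 / r) *\<^sub>R (z - x)"
        by (simp add: w_def algebra_simps)
      then have "norm (w - x) = 1"
        using False by (auto simp: r_def)
      moreover have "w \<in> S"
        unfolding w_def using False by (intro convexD[OF assms(2,5) z]) auto
      ultimately have "w \<in> K"
        by (simp add: K_def dist_norm norm_minus_commute)
      have "k w \<le> (1 - 1 / r) * k x + (1 / r) * k z"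
        unfolding w_def using False by (intro convex_onD[OF assms(3)] assms(5) z) auto
      with u[OF \<open>w \<in> K\<close>] have "r * (k x - M) \<le> r * ((1 - 1 / r) * k x + (1 / r) * k z)"
        using False by (simp add: M_def)
      then show ?thesis
        using False by (simp add: algebra_simps)
    qed
    ultimately show ?thesis
      using \<open>0 \<le> M\<close> unfolding r_def distrib_left by linarith
  qed
  ultimately show ?thesis
    using that by blast
qed

lemma continuous_attains_sup_bounded_superlevel:
  fixes h :: "'a::heine_borel \<Rightarrow> real"
  assumes "closed S" "continuous_on S h" "x \<in> S" "bounded {z \<in> S. h x \<le> h z}"
  obtains y where "y \<in> S" "\<And>z. z \<in> S \<Longrightarrow> h z \<le> h y"
proof -
  define T where "T = S \<inter> h -` {h x..}"
  have "closed T"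
    unfolding T_def using assms(1,2) by (intro continuous_closed_preimage) auto
  moreover have "bounded T"
    using assms(4) by (simp add: T_def Int_def)
  ultimately have "compact T"
    by (simp add: compact_eq_bounded_closed)
  moreover have "x \<in> T"
    using assms(3) by (simp add: T_def)
  moreover have "continuous_on T h"
    using assms(2) by (rule continuous_on_subset) (simp add: T_def)
  ultimately obtain y where y: "y \<in> T" "\<And>z. z \<in> T \<Longrightarrow> h z \<le> h y"
    using continuous_attains_sup[of T h] by blast
  have "h z \<le> h y" if "z \<in> S" for z
  proof (cases "z \<in> T")
    case False
    with that have "h z \<le> h x"
      by (simp add: T_def)
    also have "h x \<le> h y"
      using y \<open>x \<in> T\<close> by blast
    finally show ?thesis .
  qed (use y in blast)
  moreover have "y \<in> S"
    using y(1) by (simp add: T_def)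
  ultimately show ?thesis
    using that by blast
qed

text \<open>Midpoint form of strong concavity: \<open>y \<mapsto> - (c/2) * (norm y)\<^sup>2\<close> has modulus \<open>c/8\<close>.\<close>
definition mid_strongly_concave_on ::
    "'a::real_normed_vector set \<Rightarrow> real \<Rightarrow> ('a \<Rightarrow> real) \<Rightarrow> bool" where
  "mid_strongly_concave_on S \<mu> h \<longleftrightarrow>
     (\<forall>y\<in>S. \<forall>y'\<in>S. (h y + h y') / 2 + \<mu> * (norm (y - y'))\<^sup>2 \<le> h (midpoint y y'))"

lemma mid_strongly_concave_onI:
  "(\<And>y y'. y \<in> S \<Longrightarrow> y' \<in> S
      \<Longrightarrow> (h y + h y') / 2 + \<mu> * (norm (y - y'))\<^sup>2 \<le> h (midpoint y y'))
    \<Longrightarrow> mid_strongly_concave_on S \<mu> h"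
  by (simp add: mid_strongly_concave_on_def)

lemma mid_strongly_concave_onD:
  "mid_strongly_concave_on S \<mu> h \<Longrightarrow> y \<in> S \<Longrightarrow> y' \<in> S
    \<Longrightarrow> (h y + h y') / 2 + \<mu> * (norm (y - y'))\<^sup>2 \<le> h (midpoint y y')"
  by (simp add: mid_strongly_concave_on_def)

lemma mid_strongly_concave_on_Min:
  assumes "finite I" "I \<noteq> {}" "\<And>i. i \<in> I \<Longrightarrow> mid_strongly_concave_on S \<mu> (f i)"
  shows "mid_strongly_concave_on S \<mu> (\<lambda>y. Min ((\<lambda>i. f i y) ` I))"
proof (rule mid_strongly_concave_onI)
  fix y y' assume "y \<in> S" "y' \<in> S"
  have "(Min ((\<lambda>i. f i y) ` I) + Min ((\<lambda>i. f i y') ` I)) / 2 + \<mu> * (norm (y - y'))\<^sup>2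
      \<le> f i (midpoint y y')" if "i \<in> I" for i
  proof -
    have "(Min ((\<lambda>i. f i y) ` I) + Min ((\<lambda>i. f i y') ` I)) / 2 + \<mu> * (norm (y - y'))\<^sup>2
        \<le> (f i y + f i y') / 2 + \<mu> * (norm (y - y'))\<^sup>2"
      using assms(1) that by (intro add_right_mono divide_right_mono add_mono) auto
    also have "\<dots> \<le> f i (midpoint y y')"
      using mid_strongly_concave_onD[OF assms(3)[OF that] \<open>y \<in> S\<close> \<open>y' \<in> S\<close>] .
    finally show ?thesis .
  qed
  with assms(1,2) show "(Min ((\<lambda>i. f i y) ` I) + Min ((\<lambda>i. f i y') ` I)) / 2 + \<mu> * (norm (y - y'))\<^sup>2
      \<le> Min ((\<lambda>i. f i (midpoint y y')) ` I)"
    by simp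
qed

lemma mid_strongly_concave_on_gap_to_max:
  assumes "convex S" "mid_strongly_concave_on S \<mu> h"
    and "y \<in> S" "\<And>z. z \<in> S \<Longrightarrow> h z \<le> h y" "z \<in> S"
  shows "h z + 2 * \<mu> * (norm (z - y))\<^sup>2 \<le> h y"
proof -
  have "midpoint z y \<in> S"
    using assms(1,3,5) closed_segment_subset midpoint_in_closed_segment by blast
  then have "(h z + h y) / 2 + \<mu> * (norm (z - y))\<^sup>2 \<le> h y"
    using mid_strongly_concave_onD[OF assms(2,5,3)] assms(4)[of "midpoint z y"] by linarith
  then show ?thesis
    by (simp add: field_simps)
qed

lemma mid_strongly_concave_on_ex1_argmax:
  assumes "convex S" "0 < \<mu>" "mid_strongly_concave_on S \<mu> h" "\<exists>y\<in>S. \<forall>z\<in>S. h z \<le> h y"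
  shows "\<exists>!y. y \<in> S \<and> (\<forall>z\<in>S. h z \<le> h y)"
proof (rule ex_ex1I)
  fix y y' assume "y \<in> S \<and> (\<forall>z\<in>S. h z \<le> h y)" "y' \<in> S \<and> (\<forall>z\<in>S. h z \<le> h y')"
  then have "h y' + 2 * \<mu> * (norm (y' - y))\<^sup>2 \<le> h y" "h y \<le> h y'"
    using mid_strongly_concave_on_gap_to_max[OF assms(1,3)] by blast+
  then have "2 * \<mu> * (norm (y' - y))\<^sup>2 \<le> 0"
    by linarith
  with assms(2) show "y = y'"
    by (simp add: mult_le_0_iff)
qed (use assms(4) in blast)

lemma mid_strongly_concave_on_argmax_dist_le:
  assumes "convex S" "0 < \<mu>"
    and "mid_strongly_concave_on S \<mu> h" "y \<in> S" "\<And>z. z \<in> S \<Longrightarrow> h z \<le> h y"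
    and "mid_strongly_concave_on S \<mu> h'" "y' \<in> S" "\<And>z. z \<in> S \<Longrightarrow> h' z \<le> h' y'"
    and perturb: "\<And>z. z \<in> S \<Longrightarrow> \<bar>h z - h' z\<bar> \<le> \<delta> * (1 + norm z)"
  shows "norm (y' - y) \<le> \<delta> / (4 * \<mu>) + sqrt (\<delta> / (4 * \<mu>) * (2 + 2 * norm y))"
proof (rule le_of_square_le_affine)
  define d where "d = norm (y' - y)"
  define e where "e = \<mu> * d\<^sup>2"
  have "h y' + 2 * e \<le> h y"
    using mid_strongly_concave_on_gap_to_max[OF assms(1,3,4,5,7)] by (simp add: d_def e_def mult.assoc)
  moreover have "h' y + 2 * e \<le> h' y'"
    using mid_strongly_concave_on_gap_to_max[OF assms(1,6,7,8,4)] norm_minus_commute[of y y']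
    by (simp add: d_def e_def mult.assoc)
  moreover have "\<bar>h y - h' y\<bar> \<le> \<delta> * (1 + norm y)" "\<bar>h y' - h' y'\<bar> \<le> \<delta> * (1 + norm y')"
    using perturb assms(4,7) by auto
  moreover have "0 \<le> \<delta>"
  proof -
    have "0 \<le> \<delta> * (1 + norm y)"
      using abs_ge_zero calculation(3) by (rule order_trans)
    moreover have "0 < 1 + norm y"
      by (simp add: add_pos_nonneg)
    ultimately show ?thesis
      by (simp add: zero_le_mult_iff)
  qed
  then have "\<delta> * (1 + norm y') \<le> \<delta> * (1 + norm y + d)"
    using norm_triangle_sub[of y' y] by (intro mult_left_mono) (auto simp: d_def)
  ultimately have "4 * e \<le> \<delta> * (2 + 2 * norm y + d)"
    unfolding distrib_left by linarith
  with assms(2) show "d\<^sup>2 \<le> \<delta> / (4 * \<mu>) * d + \<delta> / (4 * \<mu>) * (2 + 2 * norm y)"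
    by (simp add: e_def field_simps)
  show "0 \<le> \<delta> / (4 * \<mu>)"
    using \<open>0 \<le> \<delta>\<close> assms(2) by simp
  then show "0 \<le> \<delta> / (4 * \<mu>) * (2 + 2 * norm y)"
    by (rule mult_nonneg_nonneg) simp
qed

lemma continuous_on_argmax_mid_strongly_concave:
  fixes h :: "'a::topological_space \<Rightarrow> 'b::real_normed_vector \<Rightarrow> real"
  assumes "convex S" "0 < \<mu>"
    and concave: "\<And>x. x \<in> T \<Longrightarrow> mid_strongly_concave_on S \<mu> (h x)"
    and argmax: "\<And>x. x \<in> T \<Longrightarrow> W x \<in> S"
      "\<And>x z. x \<in> T \<Longrightarrow> z \<in> S \<Longrightarrow> h x z \<le> h x (W x)"
    and perturb: "\<And>x x' z. x \<in> T \<Longrightarrow> x' \<in> T \<Longrightarrow> z \<in> S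
      \<Longrightarrow> \<bar>h x z - h x' z\<bar> \<le> \<delta> x x' * (1 + norm z)"
    and "\<And>x. x \<in> T \<Longrightarrow> (\<delta> x \<longlongrightarrow> 0) (at x within T)"
  shows "continuous_on T W"
  unfolding continuous_on_def
proof
  fix x assume "x \<in> T"
  define A where "A = 2 + 2 * norm (W x)"
  define c where "c x' = \<delta> x x' / (4 * \<mu>)" for x'
  have "norm (W x' - W x) \<le> c x' + sqrt (c x' * A)" if "x' \<in> T" for x'
    unfolding c_def A_def
    using mid_strongly_concave_on_argmax_dist_le[OF assms(1,2)
        concave[OF \<open>x \<in> T\<close>] argmax(1)[OF \<open>x \<in> T\<close>] argmax(2)[OF \<open>x \<in> T\<close>]
        concave[OF that] argmax(1)[OF that] argmax(2)[OF that] perturb[OF \<open>x \<in> T\<close> that]] .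
  then have "eventually (\<lambda>x'. norm (W x' - W x) \<le> c x' + sqrt (c x' * A)) (at x within T)"
    unfolding eventually_at_filter by (intro always_eventually) blast
  moreover have "(c \<longlongrightarrow> 0) (at x within T)"
    using assms(7)[OF \<open>x \<in> T\<close>] unfolding c_def by (rule tendsto_divide_zero)
  then have "((\<lambda>x'. c x' + sqrt (c x' * A)) \<longlongrightarrow> 0) (at x within T)"
    using tendsto_add_zero tendsto_real_sqrt[OF tendsto_mult_left_zero, of c _ A] by fastforce
  ultimately have "((\<lambda>x'. W x' - W x) \<longlongrightarrow> 0) (at x within T)"
    by (rule Lim_null_comparison)
  then show "(W \<longlongrightarrow> W x) (at x within T)"
    by (rule LIM_zero_cancel)
qed

locale multiobjective_prox =
  fixes S :: "(real^'n) set"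
    and m :: nat
    and Df :: "nat \<Rightarrow> real^'n \<Rightarrow> real^'n"
    and g :: "nat \<Rightarrow> real^'n \<Rightarrow> real"
    and l :: real
  assumes closed_S: "closed S" and convex_S: "convex S"
    and m_pos: "1 \<le> m"
    and continuous_Df: "\<And>i. i \<in> {1..m} \<Longrightarrow> continuous_on S (Df i)"
    and convex_g: "\<And>i. i \<in> {1..m} \<Longrightarrow> convex_on S (g i)"
    and continuous_g: "\<And>i. i \<in> {1..m} \<Longrightarrow> continuous_on S (g i)"
    and l_pos: "0 < l"
begin

abbreviation phi :: "real^'n \<Rightarrow> real^'n \<Rightarrow> real" where
  "phi \<equiv> mo_phi m Df g l"

abbreviation W :: "real^'n \<Rightarrow> real^'n" where
  "W \<equiv> W_map S m Df g l"

definition prox_term :: "nat \<Rightarrow> real^'n \<Rightarrow> real^'n \<Rightarrow> real" where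
  "prox_term i x y = Df i x \<bullet> (x - y) + g i x - g i y - (l / 2) * (norm (x - y))\<^sup>2"

lemma phi_eq_Min: "phi x y = Min ((\<lambda>i. prox_term i x y) ` {1..m})"
  by (simp add: mo_phi_def prox_term_def)

lemma phi_le_prox_term: "i \<in> {1..m} \<Longrightarrow> phi x y \<le> prox_term i x y"
  unfolding phi_eq_Min by (rule Min_le) auto

lemma phi_self: "phi x x = 0"
  using m_pos by (simp add: phi_eq_Min prox_term_def)

lemma prox_term_mid_strongly_concave:
  assumes "i \<in> {1..m}"
  shows "mid_strongly_concave_on S (l / 8) (prox_term i x)"
proof (rule mid_strongly_concave_onI)
  fix y y' assume "y \<in> S" "y' \<in> S"
  have "Df i x \<bullet> (x - midpoint y y') = (Df i x \<bullet> (x - y) + Df i x \<bullet> (x - y')) / 2"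
    by (simp add: midpoint_def inner_diff_right inner_add_right field_simps)
  moreover have "g i (midpoint y y') \<le> (g i y + g i y') / 2"
    using convex_onD[OF convex_g[OF assms], of "1/2" y y'] \<open>y \<in> S\<close> \<open>y' \<in> S\<close>
    by (simp add: midpoint_def scaleR_right_distrib)
  ultimately show "(prox_term i x y + prox_term i x y') / 2 + l / 8 * (norm (y - y'))\<^sup>2
      \<le> prox_term i x (midpoint y y')"
    unfolding prox_term_def norm_diff_midpoint_squared by (simp add: field_simps)
qed

lemma phi_mid_strongly_concave: "mid_strongly_concave_on S (l / 8) (phi x)"
  unfolding phi_eq_Min using m_pos
  by (intro mid_strongly_concave_on_Min prox_term_mid_strongly_concave) auto

lemma continuous_on_phi: "continuous_on (S \<times> S) (\<lambda>p. phi (fst p) (snd p))"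
  unfolding phi_eq_Min
proof (rule continuous_on_Min_image)
  fix i assume i: "i \<in> {1..m}"
  have "continuous_on (S \<times> S) (\<lambda>p. Df i (fst p))"
    by (rule continuous_on_compose2[OF continuous_Df[OF i] continuous_on_fst[OF continuous_on_id]]) auto
  moreover have "continuous_on (S \<times> S) (\<lambda>p. g i (fst p))"
    by (rule continuous_on_compose2[OF continuous_g[OF i] continuous_on_fst[OF continuous_on_id]]) auto
  moreover have "continuous_on (S \<times> S) (\<lambda>p. g i (snd p))"
    by (rule continuous_on_compose2[OF continuous_g[OF i] continuous_on_snd[OF continuous_on_id]]) auto
  ultimately show "continuous_on (S \<times> S) (\<lambda>p. prox_term i (fst p) (snd p))"
    unfolding prox_term_def by (intro continuous_intros)
qed (use m_pos in auto)

lemma continuous_on_phi_right: "x \<in> S \<Longrightarrow> continuous_on S (phi x)"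
  by (rule continuous_on_compose2[OF continuous_on_phi, of _ "\<lambda>y. (x, y)", simplified])
     (auto intro!: continuous_on_Pair continuous_on_const continuous_on_id)

lemma bounded_phi_superlevel:
  assumes "x \<in> S"
  shows "bounded {z \<in> S. phi x x \<le> phi x z}"
proof -
  have one: "1 \<in> {1..m}"
    using m_pos by simp
  obtain M where "0 \<le> M" and M: "\<And>z. z \<in> S \<Longrightarrow> g 1 x - M * (1 + norm (z - x)) \<le> g 1 z"
    using convex_on_linear_lower_bound[OF closed_S convex_S convex_g[OF one] continuous_g[OF one] assms] by blast
  define p where "p = 2 * (norm (Df 1 x) + M) / l"
  define q where "q = 2 * M / l"
  have "norm (z - x) \<le> p + sqrt q" if "z \<in> S" "0 \<le> phi x z" for z
  proof (rule le_of_square_le_affine)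
    define r where "r = norm (z - x)"
    have "0 \<le> prox_term 1 x z"
      using that(2) phi_le_prox_term[OF one] by (rule order_trans)
    moreover have "Df 1 x \<bullet> (x - z) \<le> norm (Df 1 x) * r"
      using norm_cauchy_schwarz[of "Df 1 x" "x - z"] by (simp add: r_def norm_minus_commute)
    ultimately have "l / 2 * r\<^sup>2 \<le> (norm (Df 1 x) + M) * r + M"
      using M[OF that(1)] by (simp add: prox_term_def r_def norm_minus_commute algebra_simps)
    with l_pos show "r\<^sup>2 \<le> p * r + q"
      by (simp add: p_def q_def field_simps)
    show "0 \<le> p" "0 \<le> q"
      using \<open>0 \<le> M\<close> l_pos by (simp_all add: p_def q_def)
  qed
  then have "{z \<in> S. phi x x \<le> phi x z} \<subseteq> cball x (p + sqrt q)"
    by (auto simp: phi_self dist_norm norm_minus_commute)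
  then show ?thesis
    by (rule bounded_subset[OF bounded_cball])
qed

lemma phi_ex1_argmax:
  assumes "x \<in> S"
  shows "\<exists>!y. y \<in> S \<and> (\<forall>z\<in>S. phi x z \<le> phi x y)"
proof (rule mid_strongly_concave_on_ex1_argmax[OF convex_S _ phi_mid_strongly_concave])
  show "0 < l / 8"
    using l_pos by simp
  obtain y where "y \<in> S" "\<And>z. z \<in> S \<Longrightarrow> phi x z \<le> phi x y"
    using continuous_attains_sup_bounded_superlevel[OF closed_S continuous_on_phi_right[OF assms] assms
        bounded_phi_superlevel[OF assms]] by blast
  then show "\<exists>y\<in>S. \<forall>z\<in>S. phi x z \<le> phi x y"
    by blast
qed

lemma W_map_argmax:
  assumes "x \<in> S"
  shows "W x \<in> S" "\<And>z. z \<in> S \<Longrightarrow> phi x z \<le> phi x (W x)"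
  using theI'[OF phi_ex1_argmax[OF assms]] by (simp_all add: W_map_def)

lemma w_val_eq: "x \<in> S \<Longrightarrow> w_val S m Df g l x = phi x (W x)"
  unfolding w_val_def using W_map_argmax by (intro cSup_eq_maximum) auto

definition prox_offset :: "nat \<Rightarrow> real^'n \<Rightarrow> real" where
  "prox_offset i x = Df i x \<bullet> x + g i x - (l / 2) * (norm x)\<^sup>2"

definition prox_slope :: "nat \<Rightarrow> real^'n \<Rightarrow> real^'n" where
  "prox_slope i x = l *\<^sub>R x - Df i x"

lemma prox_term_eq:
  "prox_term i x z = prox_offset i x + prox_slope i x \<bullet> z - g i z - (l / 2) * (norm z)\<^sup>2"
  by (simp add: prox_term_def prox_offset_def prox_slope_def power2_norm_eq_inner
      inner_diff_right inner_commute algebra_simps)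

definition prox_dev :: "real^'n \<Rightarrow> real^'n \<Rightarrow> real" where
  "prox_dev x x' =
     (\<Sum>i\<in>{1..m}. \<bar>prox_offset i x - prox_offset i x'\<bar> + norm (prox_slope i x - prox_slope i x'))"

lemma phi_perturbation: "\<bar>phi x z - phi x' z\<bar> \<le> prox_dev x x' * (1 + norm z)"
  unfolding phi_eq_Min
proof (rule Min_image_abs_diff_le)
  fix i assume "i \<in> {1..m}"
  define dc where "dc = \<bar>prox_offset i x - prox_offset i x'\<bar>"
  define dv where "dv = norm (prox_slope i x - prox_slope i x')"
  have "\<bar>prox_term i x z - prox_term i x' z\<bar>
      = \<bar>(prox_offset i x - prox_offset i x') + (prox_slope i x - prox_slope i x') \<bullet> z\<bar>"
    by (simp add: prox_term_eq algebra_simps)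
  also have "\<dots> \<le> dc + dv * norm z"
    unfolding dc_def dv_def by (rule order_trans[OF abs_triangle_ineq add_left_mono[OF Cauchy_Schwarz_ineq2]])
  also have "\<dots> \<le> (dc + dv) * (1 + norm z)"
    by (simp add: dc_def dv_def algebra_simps)
  also have "\<dots> \<le> prox_dev x x' * (1 + norm z)"
    unfolding dc_def dv_def prox_dev_def using \<open>i \<in> {1..m}\<close>
    by (intro mult_right_mono member_le_sum) auto
  finally show "\<bar>prox_term i x z - prox_term i x' z\<bar> \<le> prox_dev x x' * (1 + norm z)" .
qed (use m_pos in auto)

lemma prox_dev_tendsto:
  assumes "x \<in> S"
  shows "(prox_dev x \<longlongrightarrow> 0) (at x within S)"
proof -
  have "continuous_on S (prox_dev x)"
    unfolding prox_dev_def prox_offset_def prox_slope_def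
    by (intro continuous_intros continuous_Df continuous_g) auto
  with assms have "(prox_dev x \<longlongrightarrow> prox_dev x x) (at x within S)"
    by (simp add: continuous_on_def)
  then show ?thesis
    by (simp add: prox_dev_def)
qed

lemma continuous_on_W_map: "continuous_on S W"
  using convex_S _ phi_mid_strongly_concave W_map_argmax phi_perturbation prox_dev_tendsto
  by (rule continuous_on_argmax_mid_strongly_concave) (use l_pos in auto)

lemma continuous_on_w_val: "continuous_on S (w_val S m Df g l)"
proof -
  have "continuous_on S (\<lambda>x. phi x (W x))"
    by (rule continuous_on_compose2[OF continuous_on_phi, of _ "\<lambda>x. (x, W x)", simplified])
       (auto intro!: continuous_on_Pair continuous_on_id continuous_on_W_map simp: W_map_argmax)
  then show ?thesis
    by (rule continuous_on_eq) (simp add: w_val_eq)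
qed

end

theorem theorem3p12:
  fixes S :: "(real^'n) set"
    and m :: nat
    and f g :: "nat \<Rightarrow> real^'n \<Rightarrow> real"
    and Df :: "nat \<Rightarrow> real^'n \<Rightarrow> real^'n"
    and l :: real
  assumes "S \<noteq> {}" and "closed S" and "convex S"
    and "m \<ge> 1"
    and "\<And>i x. i \<in> {1..m} \<Longrightarrow> x \<in> S \<Longrightarrow>
           (f i has_derivative (\<lambda>h. Df i x \<bullet> h)) (at x)"
    and "\<And>i. i \<in> {1..m} \<Longrightarrow> continuous_on S (Df i)"
    and "\<And>i. i \<in> {1..m} \<Longrightarrow> convex_on S (g i)"
    and "\<And>i. i \<in> {1..m} \<Longrightarrow> continuous_on S (g i)"
    and "l > 0"
  shows "continuous_on S (w_val S m Df g l) \<and> continuous_on S (W_map S m Df g l)"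
proof -
  interpret multiobjective_prox S m Df g l
    using assms by unfold_locales auto
  show ?thesis
    using continuous_on_w_val continuous_on_W_map by simp
qed

end
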